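(* Let $G$ be a planar PCC graph, let $v,v'$ be vertices and let $\sigma,\sigma'$ be faces with $\sigma\in F(v)$, $\sigma'\in F(v')$ and $|\sigma|,|\sigma'|\ge 20$. If $v$ and $v'$ are adjacent in $G$, then $\sigma=\sigma'$ and the edge $vv'$ lies on the boundary of $\sigma$ (i.e. $vv'\in E(\sigma)$).
   Context: $G$ is a finite simple connected graph 2-cell embedded in the sphere. For a face $\sigma$, $E(\sigma)$ is the multiset of edges on its boundary walk and $|\sigma|$ is its length; for a vertex $v$, $F(v)$ is the multiset of faces incident to $v$ (one per corner) and $K(v)=1-\frac{\deg(v)}{2}+\sum_{\sigma\in F(v)}\frac1{|\sigma|}$. A prism (resp. antiprism) of order $N$ is the planar graph with $2N$ vertices, two $N$-faces and $N$ quadrilaterals (resp. $2N$ triangles), each vertex incident to two quadrilaterals and one $N$-face (resp. three triangles and one $N$-face). A planar PCC graph is such a $G$ with $K(v)>0$, $\deg(v)\ge3$ for all $v$, not a prism or antiprism. *)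

theory Defs
  imports Complex_Main "HOL-Library.Multiset"
begin

text \<open>Combinatorial model of a finite simple connected graph 2-cell embedded in the
sphere: a vertex set V, a symmetric irreflexive adjacency relation Adj, and a rotation
system rho (for every vertex a cyclic permutation of the darts leaving it).
Faces are the orbits of the face-tracing permutation phi (u,v) = rho (v,u);
the embedding is spherical iff V - E + F = 2 (Euler).\<close>

definition darts :: "('v \<Rightarrow> 'v \<Rightarrow> bool) \<Rightarrow> ('v \<times> 'v) set" where
  "darts Adj = {(u, w). Adj u w}"

definition out_darts :: "('v \<Rightarrow> 'v \<Rightarrow> bool) \<Rightarrow> 'v \<Rightarrow> ('v \<times> 'v) set" where
  "out_darts Adj u = {(u, w) | w. Adj u w}"

definition deg :: "('v \<Rightarrow> 'v \<Rightarrow> bool) \<Rightarrow> 'v \<Rightarrow> nat" where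
  "deg Adj u = card (out_darts Adj u)"

definition simple_graph :: "'v set \<Rightarrow> ('v \<Rightarrow> 'v \<Rightarrow> bool) \<Rightarrow> bool" where
  "simple_graph V Adj \<longleftrightarrow> finite V \<and> (\<forall>u w. Adj u w \<longrightarrow> u \<in> V \<and> w \<in> V)
     \<and> (\<forall>u w. Adj u w \<longrightarrow> Adj w u) \<and> (\<forall>u. \<not> Adj u u)"

definition connected_graph :: "'v set \<Rightarrow> ('v \<Rightarrow> 'v \<Rightarrow> bool) \<Rightarrow> bool" where
  "connected_graph V Adj \<longleftrightarrow> V \<noteq> {} \<and> (\<forall>u\<in>V. \<forall>w\<in>V. Adj\<^sup>*\<^sup>* u w)"

definition rotation_system ::
  "'v set \<Rightarrow> ('v \<Rightarrow> 'v \<Rightarrow> bool) \<Rightarrow> ('v \<times> 'v \<Rightarrow> 'v \<times> 'v) \<Rightarrow> bool" where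
  "rotation_system V Adj rho \<longleftrightarrow>
     bij_betw rho (darts Adj) (darts Adj)
     \<and> (\<forall>u\<in>V. \<forall>d\<in>out_darts Adj u. rho d \<in> out_darts Adj u)
     \<and> (\<forall>u\<in>V. \<forall>d\<in>out_darts Adj u. \<forall>d'\<in>out_darts Adj u. \<exists>n. (rho ^^ n) d = d')"

definition face_perm :: "('v \<times> 'v \<Rightarrow> 'v \<times> 'v) \<Rightarrow> 'v \<times> 'v \<Rightarrow> 'v \<times> 'v" where
  "face_perm rho d = rho (snd d, fst d)"

definition face_of :: "('v \<times> 'v \<Rightarrow> 'v \<times> 'v) \<Rightarrow> 'v \<times> 'v \<Rightarrow> ('v \<times> 'v) set" where
  "face_of rho d = {(face_perm rho ^^ n) d | n. True}"

definition faces :: "('v \<Rightarrow> 'v \<Rightarrow> bool) \<Rightarrow> ('v \<times> 'v \<Rightarrow> 'v \<times> 'v) \<Rightarrow> ('v \<times> 'v) set set" where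
  "faces Adj rho = face_of rho ` darts Adj"

definition face_len :: "('v \<times> 'v) set \<Rightarrow> nat" where
  "face_len \<sigma> = card \<sigma>"

definition face_edges :: "('v \<times> 'v) set \<Rightarrow> 'v set multiset" where
  "face_edges \<sigma> = image_mset (\<lambda>(u, w). {u, w}) (mset_set \<sigma>)"

text \<open>F(v): multiset of faces incident to v, one per corner (one corner per dart leaving v).\<close>
definition faces_at ::
  "('v \<Rightarrow> 'v \<Rightarrow> bool) \<Rightarrow> ('v \<times> 'v \<Rightarrow> 'v \<times> 'v) \<Rightarrow> 'v \<Rightarrow> ('v \<times> 'v) set multiset" where
  "faces_at Adj rho u = image_mset (face_of rho) (mset_set (out_darts Adj u))"

definition num_edges :: "('v \<Rightarrow> 'v \<Rightarrow> bool) \<Rightarrow> nat" where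
  "num_edges Adj = card {{u, w} | u w. Adj u w}"

definition plane_embedded ::
  "'v set \<Rightarrow> ('v \<Rightarrow> 'v \<Rightarrow> bool) \<Rightarrow> ('v \<times> 'v \<Rightarrow> 'v \<times> 'v) \<Rightarrow> bool" where
  "plane_embedded V Adj rho \<longleftrightarrow> simple_graph V Adj \<and> connected_graph V Adj
     \<and> rotation_system V Adj rho
     \<and> int (card V) - int (num_edges Adj) + int (card (faces Adj rho)) = 2"

definition curv ::
  "('v \<Rightarrow> 'v \<Rightarrow> bool) \<Rightarrow> ('v \<times> 'v \<Rightarrow> 'v \<times> 'v) \<Rightarrow> 'v \<Rightarrow> real" where
  "curv Adj rho u = 1 - real (deg Adj u) / 2
     + (\<Sum>\<sigma>\<in>#faces_at Adj rho u. 1 / real (face_len \<sigma>))"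

text \<open>Prism / antiprism of order N, described by the combinatorial data of the paper:
2N vertices, two N-faces and N quadrilaterals (resp. 2N triangles), every vertex incident
to two quadrilaterals and one N-face (resp. three triangles and one N-face).\<close>
definition is_prism ::
  "'v set \<Rightarrow> ('v \<Rightarrow> 'v \<Rightarrow> bool) \<Rightarrow> ('v \<times> 'v \<Rightarrow> 'v \<times> 'v) \<Rightarrow> bool" where
  "is_prism V Adj rho \<longleftrightarrow> (\<exists>N::nat. N \<ge> 3 \<and> card V = 2 * N
     \<and> image_mset face_len (mset_set (faces Adj rho)) = {#N, N#} + replicate_mset N 4
     \<and> (\<forall>u\<in>V. image_mset face_len (faces_at Adj rho u) = {#4, 4, N#}))"

definition is_antiprism ::
  "'v set \<Rightarrow> ('v \<Rightarrow> 'v \<Rightarrow> bool) \<Rightarrow> ('v \<times> 'v \<Rightarrow> 'v \<times> 'v) \<Rightarrow> bool" where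
  "is_antiprism V Adj rho \<longleftrightarrow> (\<exists>N::nat. N \<ge> 3 \<and> card V = 2 * N
     \<and> image_mset face_len (mset_set (faces Adj rho)) = {#N, N#} + replicate_mset (2 * N) 3
     \<and> (\<forall>u\<in>V. image_mset face_len (faces_at Adj rho u) = {#3, 3, 3, N#}))"

definition planar_PCC ::
  "'v set \<Rightarrow> ('v \<Rightarrow> 'v \<Rightarrow> bool) \<Rightarrow> ('v \<times> 'v \<Rightarrow> 'v \<times> 'v) \<Rightarrow> bool" where
  "planar_PCC V Adj rho \<longleftrightarrow> plane_embedded V Adj rho
     \<and> (\<forall>u\<in>V. curv Adj rho u > 0 \<and> deg Adj u \<ge> 3)
     \<and> \<not> is_prism V Adj rho \<and> \<not> is_antiprism V Adj rho"

end

theory Submission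
  imports Defs
begin

text \<open>Positive curvature at a vertex with a corner of length at least 20 leaves room for
  degree 3 or 4 only, for no second large corner, and forces the other corners to be triangles
  (degree 4) or, unless one of them is a triangle, quadrangles (degree 3).
  Call an edge crossing if both ends have a large corner but the edge lies on neither large face.
  A local case analysis shows that every neighbour of an end of a crossing edge is again the end
  of a crossing edge between the same two large faces. By connectedness every vertex then has a
  large corner, all degrees agree and all small faces are quadrangles or all are triangles.
  Euler's formula leaves exactly two large faces, and counting the crossing darts from either side
  shows that both have half of the vertices: the graph is a prism or an antiprism.
  So there are no crossing edges, which is the theorem.\<close>

section \<open>Orbits of a permutation of a finite set\<close>

definition iter_orbit :: "('a \<Rightarrow> 'a) \<Rightarrow> 'a \<Rightarrow> 'a set" where
  "iter_orbit g x = {(g ^^ n) x | n. True}"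

definition iter_period :: "('a \<Rightarrow> 'a) \<Rightarrow> 'a \<Rightarrow> nat" where
  "iter_period g x = (LEAST n. 0 < n \<and> (g ^^ n) x = x)"

locale finite_permutation_on =
  fixes g :: "'a \<Rightarrow> 'a" and S :: "'a set"
  assumes finite_carrier: "finite S" and bij: "bij_betw g S S"
begin

lemma funpow_mem: "x \<in> S \<Longrightarrow> (g ^^ n) x \<in> S"
  using bij_betw_funpow[OF bij] bij_betwE by blast

lemma funpow_cancel: "x \<in> S \<Longrightarrow> y \<in> S \<Longrightarrow> (g ^^ n) x = (g ^^ n) y \<Longrightarrow> x = y"
  using bij_betw_funpow[OF bij, of n] by (auto simp: bij_betw_def inj_on_def)

lemma funpow_returns:
  assumes "x \<in> S" obtains n where "0 < n" "(g ^^ n) x = x"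
proof -
  have "\<not> inj_on (\<lambda>k. (g ^^ k) x) {..card S}"
  proof
    assume "inj_on (\<lambda>k. (g ^^ k) x) {..card S}"
    moreover have "(\<lambda>k. (g ^^ k) x) ` {..card S} \<subseteq> S"
      using funpow_mem[OF assms] by blast
    ultimately have "card {..card S} \<le> card S"
      using card_inj_on_le finite_carrier by blast
    then show False by simp
  qed
  then obtain i j where ij: "i \<noteq> j" "(g ^^ i) x = (g ^^ j) x"
    unfolding inj_on_def by blast
  have "\<exists>i j. i < j \<and> (g ^^ i) x = (g ^^ j) x"
  proof (cases "i < j")
    case False
    with ij have "j < i" "(g ^^ j) x = (g ^^ i) x" by auto
    then show ?thesis by blast
  qed (use ij in blast)
  then obtain i j where "i < j" "(g ^^ i) x = (g ^^ j) x" by blast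
  moreover have "j = i + (j - i)" using \<open>i < j\<close> by simp
  ultimately have "(g ^^ i) ((g ^^ (j - i)) x) = (g ^^ i) x"
    by (metis comp_apply funpow_add)
  then have "(g ^^ (j - i)) x = x"
    using funpow_cancel funpow_mem assms by blast
  with \<open>i < j\<close> show ?thesis by (intro that[of "j - i"]) auto
qed

lemma iter_period:
  assumes "x \<in> S" shows "0 < iter_period g x" "(g ^^ iter_period g x) x = x"
proof -
  obtain n where "0 < n \<and> (g ^^ n) x = x" using funpow_returns[OF assms] by blast
  from LeastI[of "\<lambda>n. 0 < n \<and> (g ^^ n) x = x", OF this]
  have "0 < iter_period g x \<and> (g ^^ iter_period g x) x = x"
    unfolding iter_period_def .
  then show "0 < iter_period g x" "(g ^^ iter_period g x) x = x" by auto
qed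

lemma funpow_neq_below_iter_period: "0 < k \<Longrightarrow> k < iter_period g x \<Longrightarrow> (g ^^ k) x \<noteq> x"
  unfolding iter_period_def by (metis (mono_tags, lifting) not_less_Least)

lemma iter_orbit_eq_image:
  assumes "x \<in> S" shows "iter_orbit g x = (\<lambda>k. (g ^^ k) x) ` {..<iter_period g x}"
proof
  show "iter_orbit g x \<subseteq> (\<lambda>k. (g ^^ k) x) ` {..<iter_period g x}"
  proof
    fix y assume "y \<in> iter_orbit g x"
    then obtain n where "y = (g ^^ n) x" unfolding iter_orbit_def by blast
    then have "y = (g ^^ (n mod iter_period g x)) x"
      using funpow_mod_eq[OF iter_period(2)[OF assms]] by simp
    moreover have "n mod iter_period g x < iter_period g x"
      using iter_period(1)[OF assms] by simp
    ultimately show "y \<in> (\<lambda>k. (g ^^ k) x) ` {..<iter_period g x}" by blast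
  qed
qed (auto simp: iter_orbit_def)

lemma card_iter_orbit: assumes "x \<in> S" shows "card (iter_orbit g x) = iter_period g x"
proof -
  have "inj_on (\<lambda>k. (g ^^ k) x) {0..<iter_period g x}"
    by (rule inj_on_funpow_least)
      (use iter_period[OF assms] funpow_neq_below_iter_period in auto)
  then show ?thesis
    by (simp add: iter_orbit_eq_image[OF assms] card_image atLeast0LessThan)
qed

lemma iter_orbit_subset: "x \<in> S \<Longrightarrow> iter_orbit g x \<subseteq> S"
  unfolding iter_orbit_def using funpow_mem by blast

lemma funpow_in_iter_orbit: "(g ^^ n) x \<in> iter_orbit g x"
  unfolding iter_orbit_def by blast

lemma self_in_iter_orbit: "x \<in> iter_orbit g x"
  using funpow_in_iter_orbit[of 0] by simp

lemma iter_orbit_eqI: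
  assumes "x \<in> S" "y \<in> iter_orbit g x" shows "iter_orbit g y = iter_orbit g x"
proof
  obtain m where y: "y = (g ^^ m) x" using assms(2) unfolding iter_orbit_def by blast
  show "iter_orbit g y \<subseteq> iter_orbit g x"
  proof
    fix z assume "z \<in> iter_orbit g y"
    then obtain n where "z = (g ^^ n) ((g ^^ m) x)" unfolding iter_orbit_def y by blast
    then have "z = (g ^^ (n + m)) x" by (simp add: funpow_add)
    then show "z \<in> iter_orbit g x" by (simp add: funpow_in_iter_orbit)
  qed
  obtain q where q: "iter_period g x = Suc q"
    using iter_period(1)[OF assms(1)] not0_implies_Suc by blast
  have "(g ^^ n) x \<in> iter_orbit g y" for n
  proof -
    have "n + q * m + m = n + m * iter_period g x" by (simp add: q)
    then have "(g ^^ (n + q * m)) y = (g ^^ (n + m * iter_period g x)) x"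
      unfolding y by (metis comp_apply funpow_add)
    also have "\<dots> = (g ^^ n) x"
      by (metis funpow_mod_eq[OF iter_period(2)[OF assms(1)]] mod_mult_self1)
    finally show ?thesis by (metis funpow_in_iter_orbit)
  qed
  then show "iter_orbit g x \<subseteq> iter_orbit g y" unfolding iter_orbit_def by blast
qed

lemma iter_orbit_step: assumes "x \<in> S" shows "iter_orbit g (g x) = iter_orbit g x"
  using iter_orbit_eqI[OF assms, of "g x"] funpow_in_iter_orbit[of 1 x] by simp

end

section \<open>Rotation systems\<close>

locale rotation_graph =
  fixes V :: "'v set" and Adj :: "'v \<Rightarrow> 'v \<Rightarrow> bool" and rho :: "'v \<times> 'v \<Rightarrow> 'v \<times> 'v"
  assumes simple: "simple_graph V Adj" and rotation: "rotation_system V Adj rho"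
begin

abbreviation "D \<equiv> darts Adj"
abbreviation "out \<equiv> out_darts Adj"
abbreviation "\<phi> \<equiv> face_perm rho"
abbreviation "face \<equiv> face_of rho"

lemma finite_vertices: "finite V"
  using simple unfolding simple_graph_def by blast

lemma Adj_in_vertices: "Adj u w \<Longrightarrow> u \<in> V \<and> w \<in> V"
  using simple unfolding simple_graph_def by blast

lemma Adj_sym: "Adj u w \<Longrightarrow> Adj w u"
  using simple unfolding simple_graph_def by blast

lemma Adj_irrefl: "\<not> Adj u u"
  using simple unfolding simple_graph_def by blast

lemma in_darts [simp]: "(u, w) \<in> D \<longleftrightarrow> Adj u w"
  unfolding darts_def by simp

lemma in_out_darts: "d \<in> out u \<longleftrightarrow> d \<in> D \<and> fst d = u"
  unfolding darts_def out_darts_def by (cases d) auto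

lemma darts_subset: "D \<subseteq> V \<times> V"
  using Adj_in_vertices unfolding darts_def by auto

lemma finite_darts: "finite D"
  using darts_subset finite_vertices finite_subset by blast

lemma out_darts_subset: "out u \<subseteq> D"
  using in_out_darts by blast

lemma finite_out_darts: "finite (out u)"
  using finite_subset[OF out_darts_subset finite_darts] .

lemma dart_in_out_darts: "d \<in> D \<Longrightarrow> d \<in> out (fst d)"
  using in_out_darts by blast

lemma darts_swap: "(u, w) \<in> D \<Longrightarrow> (w, u) \<in> D"
  using Adj_sym by simp

lemma darts_neq: "(u, w) \<in> D \<Longrightarrow> u \<noteq> w"
  using Adj_irrefl by auto

lemma disjoint_out_darts: "u \<noteq> w \<Longrightarrow> out u \<inter> out w = {}"
  by (auto simp: in_out_darts)

lemma rho_bij: "bij_betw rho D D"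
  using rotation unfolding rotation_system_def by blast

lemma rho_in_darts: "d \<in> D \<Longrightarrow> rho d \<in> D"
  using rho_bij bij_betwE by blast

lemma rho_inj_eq: "d \<in> D \<Longrightarrow> e \<in> D \<Longrightarrow> rho d = rho e \<longleftrightarrow> d = e"
  using rho_bij unfolding bij_betw_def inj_on_def by blast

lemma rho_out: assumes "d \<in> out u" shows "rho d \<in> out u"
proof -
  have "u \<in> V" using assms darts_subset in_out_darts by auto
  then show ?thesis using assms rotation unfolding rotation_system_def by blast
qed

lemma rho_fst: "d \<in> D \<Longrightarrow> fst (rho d) = fst d"
  using rho_out dart_in_out_darts in_out_darts by blast

lemma rho_pairE:
  assumes "(u, w) \<in> D" obtains y where "rho (u, w) = (u, y)" "(u, y) \<in> D"
  using rho_fst[OF assms] rho_in_darts[OF assms] by (metis fst_conv prod.collapse)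

lemma rho_transitive:
  assumes "d \<in> out u" "e \<in> out u" shows "\<exists>n. (rho ^^ n) d = e"
proof -
  have "u \<in> V" using assms(1) darts_subset in_out_darts by auto
  then show ?thesis using assms rotation unfolding rotation_system_def by blast
qed

sublocale rotation: finite_permutation_on rho D
  using finite_darts rho_bij by unfold_locales

lemma phi_swap: "\<phi> (u, w) = rho (w, u)"
  unfolding face_perm_def by simp

lemma phi_in_darts: "d \<in> D \<Longrightarrow> \<phi> d \<in> D"
  using rho_in_darts darts_swap unfolding face_perm_def by (cases d) auto

lemma phi_fst: "d \<in> D \<Longrightarrow> fst (\<phi> d) = snd d"
  using rho_fst darts_swap unfolding face_perm_def by (cases d) auto

lemma phi_bij: "bij_betw \<phi> D D"
proof -
  have "inj_on \<phi> D"
  proof (rule inj_onI)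
    fix d e assume "d \<in> D" "e \<in> D" "\<phi> d = \<phi> e"
    then have "(snd d, fst d) = (snd e, fst e)"
      using rho_inj_eq darts_swap unfolding face_perm_def by (metis prod.collapse)
    then show "d = e" by (simp add: prod_eq_iff)
  qed
  then show ?thesis
    unfolding bij_betw_def using endo_inj_surj finite_darts phi_in_darts by blast
qed

sublocale facial: finite_permutation_on \<phi> D
  using finite_darts phi_bij by unfold_locales

lemma out_darts_eq_iter_orbit:
  assumes "d \<in> out u" shows "out u = iter_orbit rho d"
proof
  show "out u \<subseteq> iter_orbit rho d"
    using rho_transitive[OF assms] unfolding iter_orbit_def by blast
  have "(rho ^^ n) d \<in> out u" for n
    by (induction n) (auto simp: assms rho_out)
  then show "iter_orbit rho d \<subseteq> out u"
    unfolding iter_orbit_def by blast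
qed

lemma deg_eq_iter_period: "d \<in> out u \<Longrightarrow> deg Adj u = iter_period rho d"
  unfolding deg_def using out_darts_eq_iter_orbit rotation.card_iter_orbit out_darts_subset
  by (metis subsetD)

lemma funpow_deg: "d \<in> D \<Longrightarrow> (rho ^^ deg Adj (fst d)) d = d"
  using deg_eq_iter_period dart_in_out_darts rotation.iter_period(2) by metis

lemma funpow_neq_below_deg: "d \<in> D \<Longrightarrow> 0 < k \<Longrightarrow> k < deg Adj (fst d) \<Longrightarrow> (rho ^^ k) d \<noteq> d"
  using deg_eq_iter_period dart_in_out_darts rotation.funpow_neq_below_iter_period by metis

lemma out_darts_deg:
  assumes "d \<in> D" shows "out (fst d) = (\<lambda>k. (rho ^^ k) d) ` {..<deg Adj (fst d)}"
  using out_darts_eq_iter_orbit rotation.iter_orbit_eq_image deg_eq_iter_period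
    dart_in_out_darts assms by metis

lemma out_darts_deg3:
  assumes "d \<in> D" "deg Adj (fst d) = 3"
  shows "out (fst d) = {d, rho d, rho (rho d)}" "rho (rho (rho d)) = d"
proof -
  have "{..<3::nat} = {0, 1, 2}" by auto
  then show "out (fst d) = {d, rho d, rho (rho d)}"
    using out_darts_deg[OF assms(1)] assms(2) by (simp add: eval_nat_numeral)
  show "rho (rho (rho d)) = d"
    using funpow_deg[OF assms(1)] assms(2) by (simp add: eval_nat_numeral)
qed

lemma out_darts_deg4:
  assumes "d \<in> D" "deg Adj (fst d) = 4"
  shows "out (fst d) = {d, rho d, rho (rho d), rho (rho (rho d))}"
    "rho (rho (rho (rho d))) = d"
proof -
  have "{..<4::nat} = {0, 1, 2, 3}" by auto
  then show "out (fst d) = {d, rho d, rho (rho d), rho (rho (rho d))}"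
    using out_darts_deg[OF assms(1)] assms(2) by (simp add: eval_nat_numeral)
  show "rho (rho (rho (rho d))) = d"
    using funpow_deg[OF assms(1)] assms(2) by (simp add: eval_nat_numeral)
qed

lemma face_eq_iter_orbit: "face d = iter_orbit \<phi> d"
  unfolding face_of_def iter_orbit_def ..

lemma face_self: "d \<in> face d"
  unfolding face_eq_iter_orbit by (rule facial.self_in_iter_orbit)

lemma face_eqI: "d \<in> D \<Longrightarrow> e \<in> face d \<Longrightarrow> face e = face d"
  unfolding face_eq_iter_orbit by (rule facial.iter_orbit_eqI)

lemma face_phi: "d \<in> D \<Longrightarrow> face (\<phi> d) = face d"
  unfolding face_eq_iter_orbit by (rule facial.iter_orbit_step)

lemma face_subset: "d \<in> D \<Longrightarrow> face d \<subseteq> D"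
  unfolding face_eq_iter_orbit by (rule facial.iter_orbit_subset)

lemma finite_face: "d \<in> D \<Longrightarrow> finite (face d)"
  using face_subset finite_darts finite_subset by blast

lemma card_face: "d \<in> D \<Longrightarrow> card (face d) = iter_period \<phi> d"
  unfolding face_eq_iter_orbit by (rule facial.card_iter_orbit)

lemma face_swap: "(u, w) \<in> D \<Longrightarrow> face (w, u) = face (rho (u, w))"
  using face_phi[of "(w, u)"] darts_swap by (simp add: phi_swap)

lemma triangle_walk:
  assumes "(u, p) \<in> D" "rho (u, p) = (u, a)" "card (face (u, a)) = 3"
  shows "rho (a, u) = (a, p)" "rho (p, a) = (p, u)"
proof -
  have ua: "(u, a) \<in> D" using assms(1,2) rho_in_darts by metis
  obtain b where b: "rho (a, u) = (a, b)" "(a, b) \<in> D"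
    using rho_pairE darts_swap[OF ua] by metis
  obtain c where c: "rho (b, a) = (b, c)" "(b, c) \<in> D"
    using rho_pairE darts_swap[OF b(2)] by metis
  have "(\<phi> ^^ 3) (u, a) = (u, a)"
    using facial.iter_period(2) card_face ua assms(3) by metis
  then have cb: "rho (c, b) = (u, a)"
    using b c by (simp add: eval_nat_numeral phi_swap)
  then have "c = u"
    using rho_fst darts_swap[OF c(2)] by (metis fst_conv)
  then have "rho (u, b) = rho (u, p)" "(u, b) \<in> D"
    using cb assms(2) darts_swap[OF c(2)] by simp_all
  then have "b = p" using rho_inj_eq assms(1) by blast
  with b c \<open>c = u\<close> show "rho (a, u) = (a, p)" "rho (p, a) = (p, u)" by auto
qed

lemma quadrangle_walk:
  assumes "(u, p) \<in> D" "rho (u, p) = (u, a)" "card (face (u, a)) = 4"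
  obtains b where "rho (a, u) = (a, b)" "rho (b, a) = (b, p)" "rho (p, b) = (p, u)"
    "(a, b) \<in> D"
proof -
  have ua: "(u, a) \<in> D" using assms(1,2) rho_in_darts by metis
  obtain b where b: "rho (a, u) = (a, b)" "(a, b) \<in> D"
    using rho_pairE darts_swap[OF ua] by metis
  obtain c where c: "rho (b, a) = (b, c)" "(b, c) \<in> D"
    using rho_pairE darts_swap[OF b(2)] by metis
  obtain e where e: "rho (c, b) = (c, e)" "(c, e) \<in> D"
    using rho_pairE darts_swap[OF c(2)] by metis
  have "(\<phi> ^^ 4) (u, a) = (u, a)"
    using facial.iter_period(2) card_face ua assms(3) by metis
  then have ec: "rho (e, c) = (u, a)"
    using b c e by (simp add: eval_nat_numeral phi_swap)
  then have "e = u"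
    using rho_fst darts_swap[OF e(2)] by (metis fst_conv)
  then have "rho (u, c) = rho (u, p)" "(u, c) \<in> D"
    using ec assms(2) darts_swap[OF e(2)] by simp_all
  then have "c = p" using rho_inj_eq assms(1) by blast
  with b c e \<open>e = u\<close> show thesis by (intro that[of b]) auto
qed

lemma finite_faces: "finite (faces Adj rho)"
  unfolding faces_def using finite_darts by simp

lemma faces_disjoint: "pairwise disjnt (faces Adj rho)"
proof (rule pairwiseI)
  fix X Y assume "X \<in> faces Adj rho" "Y \<in> faces Adj rho" "X \<noteq> Y"
  then obtain d e where de: "d \<in> D" "e \<in> D" "X = face d" "Y = face e" unfolding faces_def by blast
  show "disjnt X Y"
    unfolding disjnt_iff
  proof (intro allI notI)
    fix z assume "z \<in> X \<and> z \<in> Y"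
    then have "face z = face d" "face z = face e"
      using face_eqI[OF de(1), of z] face_eqI[OF de(2), of z] de(3,4) by auto
    then show False using \<open>X \<noteq> Y\<close> de(3,4) by simp
  qed
qed

lemma finite_face_of_faces: "X \<in> faces Adj rho \<Longrightarrow> finite X"
  unfolding faces_def using finite_face by blast

lemma Union_faces: "\<Union>(faces Adj rho) = D"
proof
  show "\<Union>(faces Adj rho) \<subseteq> D" unfolding faces_def using face_subset by blast
  show "D \<subseteq> \<Union>(faces Adj rho)" unfolding faces_def using face_self by blast
qed

lemma card_Union_faces: "F \<subseteq> faces Adj rho \<Longrightarrow> card (\<Union>F) = (\<Sum>X\<in>F. card X)"
  by (rule card_Union_disjoint[OF pairwise_subset[OF faces_disjoint]])
    (auto intro: finite_face_of_faces)

lemma card_darts_eq_sum_deg: "card D = (\<Sum>u\<in>V. deg Adj u)"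
proof -
  have "D = (\<Union>u\<in>V. out u)" using in_out_darts darts_subset by fastforce
  then show ?thesis
    unfolding deg_def using finite_out_darts disjoint_out_darts
    by (simp add: card_UN_disjoint[OF finite_vertices])
qed

lemma card_darts_eq_twice_edges: "card D = 2 * num_edges Adj"
proof -
  let ?e = "\<lambda>d. {fst d, snd d}"
  have edges: "{{u, w} | u w. Adj u w} = ?e ` D"
  proof
    show "{{u, w} | u w. Adj u w} \<subseteq> ?e ` D"
    proof
      fix X assume "X \<in> {{u, w} | u w. Adj u w}"
      then obtain u w where "X = ?e (u, w)" "(u, w) \<in> D" by auto
      then show "X \<in> ?e ` D" by blast
    qed
    show "?e ` D \<subseteq> {{u, w} | u w. Adj u w}" by (auto simp: darts_def) blast
  qed
  have fibre: "card {d \<in> D. ?e d = ?e d0} = 2" if dart: "d0 \<in> D" for d0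
  proof -
    obtain u w where d0: "d0 = (u, w)" "Adj u w" using dart by (cases d0) auto
    then have "{d \<in> D. ?e d = ?e d0} = {(u, w), (w, u)}"
      using Adj_sym[OF d0(2)] by (auto simp: doubleton_eq_iff)
    then show ?thesis using darts_neq d0 by simp
  qed
  have "card D = (\<Sum>e\<in>?e ` D. card {d \<in> D. ?e d = e})"
    using sum.image_gen[OF finite_darts, of "\<lambda>_. 1::nat" ?e] by simp
  also have "\<dots> = (\<Sum>e\<in>?e ` D. 2)"
  proof (rule sum.cong[OF refl])
    fix e assume "e \<in> ?e ` D"
    then obtain d0 where "d0 \<in> D" "e = ?e d0" by blast
    then show "card {d \<in> D. ?e d = e} = 2" using fibre by blast
  qed
  finally show ?thesis unfolding num_edges_def edges by simp
qed

end

section \<open>Vertices with a large corner\<close>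

locale pcc_graph =
  fixes V :: "'v set" and Adj :: "'v \<Rightarrow> 'v \<Rightarrow> bool" and rho :: "'v \<times> 'v \<Rightarrow> 'v \<times> 'v"
  assumes pcc: "planar_PCC V Adj rho"

sublocale pcc_graph \<subseteq> rotation_graph
  using pcc unfolding planar_PCC_def plane_embedded_def by unfold_locales blast+

context pcc_graph
begin

lemma curv_pos: "u \<in> V \<Longrightarrow> curv Adj rho u > 0"
  using pcc unfolding planar_PCC_def by blast

lemma deg_ge3: "u \<in> V \<Longrightarrow> deg Adj u \<ge> 3"
  using pcc unfolding planar_PCC_def by blast

lemma dart_fst_deg_ge3: "d \<in> D \<Longrightarrow> deg Adj (fst d) \<ge> 3"
  using deg_ge3 darts_subset by auto

lemma rho_neq: "d \<in> D \<Longrightarrow> rho d \<noteq> d"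
  using funpow_neq_below_deg[of d 1] dart_fst_deg_ge3 by fastforce

lemma rho_rho_neq: "d \<in> D \<Longrightarrow> rho (rho d) \<noteq> d"
  using funpow_neq_below_deg[of d 2] dart_fst_deg_ge3 by (fastforce simp: eval_nat_numeral)

lemma card_face_ge3: assumes "d \<in> D" shows "card (face d) \<ge> 3"
proof -
  obtain u w where d: "d = (u, w)" by (cases d)
  have "\<phi> d \<noteq> d" using phi_fst[OF assms] darts_neq assms d by auto
  moreover have "\<phi> (\<phi> d) \<noteq> d"
  proof
    assume "\<phi> (\<phi> d) = d"
    obtain x where x: "rho (w, u) = (w, x)" "(w, x) \<in> D"
      using rho_pairE darts_swap assms d by metis
    then have "rho (x, w) = (u, w)" using \<open>\<phi> (\<phi> d) = d\<close> d by (simp add: phi_swap)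
    then have "x = u" using rho_fst darts_swap[OF x(2)] by (metis fst_conv)
    then show False using x rho_neq by auto
  qed
  ultimately have "iter_period \<phi> d \<noteq> 1" "iter_period \<phi> d \<noteq> 2"
    using facial.iter_period(2)[OF assms] by (auto simp: eval_nat_numeral)
  then show ?thesis using facial.iter_period(1)[OF assms] card_face[OF assms] by linarith
qed

definition corner_weight :: "'v \<times> 'v \<Rightarrow> real" where
  "corner_weight d = 1 / real (card (face d))"

lemma curv_eq_sum_corner_weight:
  "curv Adj rho u = 1 - real (deg Adj u) / 2 + (\<Sum>d\<in>out u. corner_weight d)"
  unfolding curv_def faces_at_def corner_weight_def face_len_def
  by (simp add: sum_unfold_sum_mset multiset.map_comp o_def)

lemma corner_weight_le: "d \<in> D \<Longrightarrow> k \<le> card (face d) \<Longrightarrow> 0 < k \<Longrightarrow> corner_weight d \<le> 1 / real k"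
  unfolding corner_weight_def by (simp add: frac_le)

definition large :: "'v \<times> 'v \<Rightarrow> bool" where
  "large d \<longleftrightarrow> 20 \<le> card (face d)"

lemma large_corner_curvature_bound:
  assumes l: "l \<in> out u" "large l" and A: "A \<subseteq> out u - {l}"
  shows "real (deg Adj u) / 2 - 1
    < 1/20 + (\<Sum>d\<in>A. corner_weight d) + real (deg Adj u - 1 - card A) / 3"
proof -
  let ?R = "out u - {l} - A"
  have u: "u \<in> V" using l(1) darts_subset in_out_darts by auto
  have fin: "finite (out u - {l})" using finite_out_darts by simp
  have split: "(\<Sum>d\<in>out u. corner_weight d)
      = corner_weight l + (\<Sum>d\<in>A. corner_weight d) + (\<Sum>d\<in>?R. corner_weight d)"
    using sum.remove[OF finite_out_darts l(1), of corner_weight]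
      sum.subset_diff[OF A fin, of corner_weight] by linarith
  have "corner_weight l \<le> 1/20"
    using corner_weight_le[of l 20] l out_darts_subset unfolding large_def by auto
  moreover have "corner_weight d \<le> 1/3" if "d \<in> ?R" for d
    using that corner_weight_le[of d 3] card_face_ge3[of d] out_darts_subset by auto
  then have "(\<Sum>d\<in>?R. corner_weight d) \<le> real (card ?R) * (1/3)"
    by (intro sum_bounded_above) auto
  moreover have "card ?R = deg Adj u - 1 - card A"
    using A fin l(1) finite_subset[OF A fin] unfolding deg_def
    by (simp add: card_Diff_subset)
  ultimately show ?thesis
    using split curv_pos[OF u] curv_eq_sum_corner_weight[of u] by simp
qed

lemma large_corner_deg_le4: "l \<in> out u \<Longrightarrow> large l \<Longrightarrow> deg Adj u \<le> 4"
  using large_corner_curvature_bound[of l u "{}"] by simp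

lemma large_corner_unique:
  assumes "l \<in> out u" "large l" "d \<in> out u" "large d" shows "d = l"
proof (rule ccontr)
  assume "d \<noteq> l"
  then have "real (deg Adj u) / 2 - 1 < 1/20 + corner_weight d + real (deg Adj u - 2) / 3"
    using large_corner_curvature_bound[of l u "{d}"] assms by (simp add: diff_diff_add)
  moreover have "corner_weight d \<le> 1/20"
    using corner_weight_le[of d 20] assms out_darts_subset unfolding large_def by auto
  moreover have "deg Adj u \<ge> 3"
    using deg_ge3 assms(1) darts_subset in_out_darts by auto
  then have "real (deg Adj u - 2) = real (deg Adj u) - 2" "real (deg Adj u) \<ge> 3" by auto
  ultimately show False by linarith
qed

lemma large_corner_deg4_triangles:
  assumes "l \<in> out u" "large l" "deg Adj u = 4" "d \<in> out u" "d \<noteq> l"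
  shows "card (face d) = 3"
proof (rule ccontr)
  assume "card (face d) \<noteq> 3"
  then have "corner_weight d \<le> 1/4"
    using corner_weight_le[of d 4] card_face_ge3[of d] assms(4) out_darts_subset by fastforce
  then show False
    using large_corner_curvature_bound[of l u "{d}"] assms by simp
qed

lemma large_corner_deg3_quadrangles:
  assumes "l \<in> out u" "large l" "deg Adj u = 3"
    and "d \<in> out u" "e \<in> out u" "d \<noteq> l" "e \<noteq> l" "d \<noteq> e"
    and "card (face d) \<ge> 4" "card (face e) \<ge> 4"
  shows "card (face d) = 4 \<and> card (face e) = 4"
proof (rule ccontr)
  assume "\<not> ?thesis"
  then have "corner_weight d + corner_weight e \<le> 1/4 + 1/5"
    using corner_weight_le[of d 4] corner_weight_le[of e 4] corner_weight_le[of d 5]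
      corner_weight_le[of e 5] assms(4,5,9,10) out_darts_subset by fastforce
  then show False
    using large_corner_curvature_bound[of l u "{d, e}"] assms by simp
qed

definition has_large_corner :: "'v \<Rightarrow> bool" where
  "has_large_corner u \<longleftrightarrow> (\<exists>d\<in>out u. large d)"

definition large_dart :: "'v \<Rightarrow> 'v \<times> 'v" where
  "large_dart u = (SOME d. d \<in> out u \<and> large d)"

definition large_face :: "'v \<Rightarrow> ('v \<times> 'v) set" where
  "large_face u = face (large_dart u)"

lemma large_dart:
  assumes "has_large_corner u" shows "large_dart u \<in> out u" "large (large_dart u)"
  using someI_ex[of "\<lambda>d. d \<in> out u \<and> large d"] assms
  unfolding has_large_corner_def large_dart_def by blast+

lemma large_dart_in_darts: "has_large_corner u \<Longrightarrow> large_dart u \<in> D"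
  using large_dart(1) out_darts_subset by blast

lemma large_dart_fst: "has_large_corner u \<Longrightarrow> fst (large_dart u) = u"
  using large_dart(1) in_out_darts by blast

lemma large_dart_eq: "d \<in> D \<Longrightarrow> large d \<Longrightarrow> large_dart (fst d) = d"
  using large_dart large_corner_unique dart_in_out_darts unfolding has_large_corner_def by metis

lemma has_large_cornerI: "d \<in> D \<Longrightarrow> large d \<Longrightarrow> has_large_corner (fst d)"
  using dart_in_out_darts unfolding has_large_corner_def by blast

lemma has_large_corner_in_vertices: "has_large_corner u \<Longrightarrow> u \<in> V"
  using large_dart_in_darts large_dart_fst darts_subset by fastforce

lemma has_large_corner_deg:
  assumes "has_large_corner u" shows "deg Adj u = 3 \<or> deg Adj u = 4"
proof -
  have "deg Adj u \<le> 4" using large_corner_deg_le4 large_dart[OF assms] by blast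
  moreover have "deg Adj u \<ge> 3" using deg_ge3 has_large_corner_in_vertices[OF assms] by blast
  ultimately show ?thesis by linarith
qed

lemma large_swap: "(u, w) \<in> D \<Longrightarrow> large (w, u) \<longleftrightarrow> large (rho (u, w))"
  unfolding large_def using face_swap by simp

lemma not_large_rho: assumes "d \<in> D" "large d" shows "\<not> large (rho d)"
proof
  assume "large (rho d)"
  then have "rho d = d"
    using large_corner_unique[of d "fst d" "rho d"] rho_out dart_in_out_darts assms by blast
  then show False using rho_neq assms(1) by blast
qed

lemma not_large_rho_rho: assumes "d \<in> D" "large d" shows "\<not> large (rho (rho d))"
proof
  assume "large (rho (rho d))"
  then have "rho (rho d) = d"
    using large_corner_unique[of d "fst d" "rho (rho d)"] rho_out dart_in_out_darts assms by blast
  then show False using rho_rho_neq assms(1) by blast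
qed

lemma large_dart_fourth:
  assumes "has_large_corner u" "d \<in> out u"
    and "\<not> large d" "\<not> large (rho d)" "\<not> large (rho (rho d))"
  shows "deg Adj u = 4" "large_dart u = rho (rho (rho d))"
proof -
  have d: "d \<in> D" "fst d = u" using assms(2) in_out_darts by auto
  have "deg Adj u \<noteq> 3"
  proof
    assume "deg Adj u = 3"
    then have "out u = {d, rho d, rho (rho d)}" using out_darts_deg3 d by metis
    then show False using large_dart[OF assms(1)] assms(3-5) by auto
  qed
  then show "deg Adj u = 4" using has_large_corner_deg assms(1) by blast
  then have "out u = {d, rho d, rho (rho d), rho (rho (rho d))}" using out_darts_deg4 d by metis
  then show "large_dart u = rho (rho (rho d))" using large_dart[OF assms(1)] assms(3-5) by auto
qed

lemma quadrangle_corner_deg3: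
  assumes "has_large_corner u" "d \<in> out u" "card (face d) = 4" shows "deg Adj u = 3"
proof (rule ccontr)
  assume "deg Adj u \<noteq> 3"
  then have "deg Adj u = 4" using has_large_corner_deg[OF assms(1)] by simp
  moreover have "d \<noteq> large_dart u"
    using large_dart(2)[OF assms(1)] assms(3) by (auto simp: large_def)
  ultimately have "card (face d) = 3"
    using large_corner_deg4_triangles[OF large_dart[OF assms(1)]] assms(2) by blast
  then show False using assms(3) by simp
qed

lemma card_out_darts_off_large_face:
  assumes "has_large_corner u"
  shows "card {d \<in> out u. \<not> large d \<and> \<not> large (rho d)} = deg Adj u - 2"
proof -
  let ?l = "large_dart u" and ?n = "deg Adj u"
  let ?p = "(rho ^^ (?n - 1)) ?l"
  have l: "?l \<in> D" "fst ?l = u" "large ?l" "?l \<in> out u"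
    using large_dart_in_darts large_dart_fst large_dart assms by auto
  have n: "?n \<ge> 3" using deg_ge3 has_large_corner_in_vertices assms by blast
  have p: "?p \<in> out u" using out_darts_deg[OF l(1)] l(2) n by auto
  have "rho ?p = (rho ^^ Suc (?n - 1)) ?l" by simp
  then have rho_p: "rho ?p = ?l" using funpow_deg[OF l(1)] l(2) n by simp
  have "?p \<noteq> ?l" using funpow_neq_below_deg[OF l(1), of "?n - 1"] l(2) n by simp
  have "{d \<in> out u. \<not> large d \<and> \<not> large (rho d)} = out u - {?l, ?p}"
  proof (intro set_eqI iffI)
    fix d assume "d \<in> {d \<in> out u. \<not> large d \<and> \<not> large (rho d)}"
    then show "d \<in> out u - {?l, ?p}" using l(3) rho_p by auto
  next
    fix d assume d: "d \<in> out u - {?l, ?p}"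
    then have "\<not> large d" using large_corner_unique[OF l(4) l(3), of d] by blast
    moreover have "\<not> large (rho d)"
    proof
      assume "large (rho d)"
      moreover have "rho d \<in> out u" using rho_out d by blast
      ultimately have "rho d = ?l" using large_corner_unique[OF l(4) l(3), of "rho d"] by blast
      then have "rho d = rho ?p" using rho_p by simp
      then show False using rho_inj_eq[of d ?p] d p out_darts_subset by auto
    qed
    ultimately show "d \<in> {d \<in> out u. \<not> large d \<and> \<not> large (rho d)}" using d by blast
  qed
  then show ?thesis
    using \<open>?p \<noteq> ?l\<close> l(4) p finite_out_darts unfolding deg_def
    by (simp add: card_Diff_subset)
qed

section \<open>Edges between two large faces\<close>

definition crossing :: "'v \<Rightarrow> 'v \<Rightarrow> bool" where
  "crossing v w \<longleftrightarrow> Adj v w \<and> has_large_corner v \<and> has_large_corner w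
     \<and> \<not> large (v, w) \<and> \<not> large (w, v)"

lemma crossing_sym: "crossing v w \<Longrightarrow> crossing w v"
  unfolding crossing_def using Adj_sym by blast

lemma not_crossing_large_face_eq:
  assumes "has_large_corner u" "has_large_corner w" "Adj u w" "\<not> crossing u w"
  shows "large_face u = large_face w"
proof -
  have uw: "(u, w) \<in> D" "(w, u) \<in> D" using assms(3) Adj_sym by auto
  have "large (u, w) \<or> large (w, u)" using assms unfolding crossing_def by blast
  then show ?thesis
  proof
    assume "large (u, w)"
    then have "large_dart u = (u, w)" "large_dart w = rho (w, u)"
      using large_dart_eq[of "(u, w)"] large_dart_eq[of "rho (w, u)"] large_swap[of w u]
        rho_in_darts rho_fst uw by auto
    then show ?thesis unfolding large_face_def using face_swap[of w u] uw by simp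
  next
    assume "large (w, u)"
    then have "large_dart w = (w, u)" "large_dart u = rho (u, w)"
      using large_dart_eq[of "(w, u)"] large_dart_eq[of "rho (u, w)"] large_swap[of u w]
        rho_in_darts rho_fst uw by auto
    then show ?thesis unfolding large_face_def using face_swap[of u w] uw by simp
  qed
qed

subsection \<open>A crossing edge at a vertex of degree 3\<close>

context
  fixes v v' :: 'v
  assumes crossing: "crossing v v'" and deg3: "deg Adj v = 3"
begin

lemma crossing_deg3_rotation:
  "rho (large_dart v) = (v, v')" "rho (rho (v, v')) = large_dart v"
  "out v = {large_dart v, (v, v'), rho (v, v')}"
proof -
  let ?l = "large_dart v"
  have cr: "Adj v v'" "has_large_corner v" "\<not> large (v, v')" "\<not> large (v', v)"
    using crossing unfolding crossing_def by auto
  have l: "?l \<in> D" "fst ?l = v" "large ?l"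
    using large_dart[OF cr(2)] in_out_darts by auto
  have out: "out v = {?l, rho ?l, rho (rho ?l)}" "rho (rho (rho ?l)) = ?l"
    using out_darts_deg3[OF l(1)] l(2) deg3 by auto
  have "(v, v') \<noteq> rho (rho ?l)"
  proof
    assume "(v, v') = rho (rho ?l)"
    then have "rho (v, v') = ?l" using out(2) by simp
    then show False using large_swap[of v v'] cr(1,4) l(3) by simp
  qed
  moreover have "(v, v') \<in> out v" "(v, v') \<noteq> ?l"
    using cr(1,3) l(3) in_out_darts by auto
  ultimately show "rho ?l = (v, v')" using out(1) by auto
  then show "rho (rho (v, v')) = ?l" "out v = {?l, (v, v'), rho (v, v')}"
    using out by auto
qed

text \<open>If the face of \<open>(v, v')\<close> were a triangle, \<open>v'\<close> would be forced to have degree 4 with its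
  large corner just before \<open>(v', v)\<close>, and the third vertex \<open>s\<close> of the triangle at \<open>(v', v)\<close>
  would get two large corners.\<close>

lemma crossing_deg3_not_triangle: "card (face (v, v')) \<noteq> 3"
proof
  assume tri: "card (face (v, v')) = 3"
  have cr: "Adj v v'" "has_large_corner v" "has_large_corner v'" "\<not> large (v', v)"
    using crossing unfolding crossing_def by auto
  obtain x where l: "large_dart v = (v, x)"
    using large_dart_fst[OF cr(2)] by (metis prod.collapse)
  have vx: "Adj v x" "large (v, x)"
    using large_dart_in_darts[OF cr(2)] large_dart(2)[OF cr(2)] l by auto
  have rvx: "rho (v, x) = (v, v')" using crossing_deg3_rotation(1) l by simp
  have walk: "rho (v', v) = (v', x)" "rho (x, v') = (x, v)"
    using triangle_walk[of v x v'] vx rvx tri by auto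
  have v'x: "Adj v' x" using rho_in_darts[of "(v', v)"] walk(1) cr(1) Adj_sym by auto
  have xl: "large (rho (x, v))" using large_swap[of x v] vx Adj_sym by simp
  have not3: "\<not> large (rho (v', x))"
  proof
    assume "large (rho (v', x))"
    then have "large (x, v')" using large_swap[of v' x] v'x by simp
    then have "\<not> large (rho (rho (x, v')))" using not_large_rho_rho v'x Adj_sym by simp
    then show False using walk(2) xl by simp
  qed
  have "face (v', x) = face (v, v')" using face_swap[of v' v] walk(1) cr(1) Adj_sym by simp
  then have not2: "\<not> large (v', x)" using tri by (simp add: large_def)
  obtain s where m: "large_dart v' = (v', s)"
    using large_dart_fst[OF cr(3)] by (metis prod.collapse)
  have "deg Adj v' = 4" "large_dart v' = rho (rho (rho (v', v)))"
    using large_dart_fourth[OF cr(3), of "(v', v)"] cr(1,4) walk(1) not2 not3 Adj_sym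
    by (auto simp: in_out_darts)
  then have m3: "rho (rho (rho (v', v))) = (v', s)" using m by simp
  have "(rho ^^ 4) (v', v) = (v', v)"
    using funpow_deg[of "(v', v)"] \<open>deg Adj v' = 4\<close> cr(1) Adj_sym by simp
  then have sv: "rho (v', s) = (v', v)" using m3 by (simp add: eval_nat_numeral)
  have vs: "Adj v' s" using large_dart_in_darts[OF cr(3)] m by simp
  have "card (face (v', v)) = 3"
    using large_corner_deg4_triangles[of "(v', s)" v' "(v', v)"] \<open>deg Adj v' = 4\<close> m
      large_dart[OF cr(3)] cr(1,4) Adj_sym by (auto simp: in_out_darts)
  then have walk': "rho (v, v') = (v, s)" "rho (s, v) = (s, v')"
    using triangle_walk[of v' s v] vs sv by auto
  have sv': "Adj s v" using rho_in_darts[of "(v, v')"] walk'(1) cr(1) Adj_sym by auto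
  have "rho (v, s) = large_dart v" using walk'(1) crossing_deg3_rotation(2) by simp
  then have "large (s, v)" using large_swap[of v s] vx(2) l sv' Adj_sym by simp
  moreover have "large (rho (rho (s, v)))"
    using large_swap[of s v'] large_dart(2)[OF cr(3)] m walk'(2) vs Adj_sym by simp
  ultimately show False using not_large_rho_rho[of "(s, v)"] sv' by simp
qed

lemma crossing_deg3_not_triangle': "card (face (v', v)) \<noteq> 3"
proof
  assume tri: "card (face (v', v)) = 3"
  have cr: "Adj v v'" "has_large_corner v" "has_large_corner v'" "\<not> large (v, v')"
    using crossing unfolding crossing_def by auto
  obtain s where s: "rho (v, v') = (v, s)" "Adj v s"
    using rho_pairE[of v v'] cr(1) by auto
  have "card (face (v, s)) = 3" using face_swap[of v v'] s(1) cr(1) tri by simp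
  then have walk: "rho (s, v) = (s, v')" "rho (v', s) = (v', v)"
    using triangle_walk[of v v' s] s cr(1) by auto
  have "rho (v, s) = large_dart v" using s(1) crossing_deg3_rotation(2) by simp
  then have sv: "large (s, v)"
    using large_swap[of v s] large_dart(2)[OF cr(2)] s(2) by simp
  have s'v: "Adj s v'" using rho_in_darts[of "(s, v)"] walk(1) s(2) Adj_sym by auto
  have not1: "\<not> large (v', s)"
  proof
    assume "large (v', s)"
    then have "large (rho (rho (s, v)))" using large_swap[of s v'] walk(1) s'v by simp
    then show False using not_large_rho_rho[of "(s, v)"] sv s(2) Adj_sym by simp
  qed
  have not3: "\<not> large (rho (v', v))" using large_swap[of v' v] cr(1,4) Adj_sym by simp
  have "deg Adj v' = 4" "large_dart v' = rho (rho (v', v))"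
    using large_dart_fourth[OF cr(3), of "(v', s)"] walk(2) not1 not3 s'v Adj_sym
      crossing unfolding crossing_def by (auto simp: in_out_darts)
  moreover have "rho (v', v) \<noteq> rho (rho (v', v))"
    using rho_neq[of "rho (v', v)"] rho_in_darts[of "(v', v)"] cr(1) Adj_sym by auto
  ultimately have "card (face (rho (v', v))) = 3"
    using large_corner_deg4_triangles[of "large_dart v'" v' "rho (v', v)"] large_dart[OF cr(3)]
      rho_out[of "(v', v)" v'] cr(1) Adj_sym by (auto simp: in_out_darts)
  then show False
    using face_swap[of v' v] crossing_deg3_not_triangle cr(1) Adj_sym by simp
qed

lemma crossing_deg3_quadrangles:
  "card (face (v, v')) = 4" "card (face (v', v)) = 4" "deg Adj v' = 3"
proof -
  have cr: "Adj v v'" "has_large_corner v" "has_large_corner v'" "\<not> large (v, v')" "\<not> large (v', v)"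
    using crossing unfolding crossing_def by auto
  have swap: "face (rho (v, v')) = face (v', v)" using face_swap[of v v'] cr(1) by simp
  have "rho (v, v') \<noteq> large_dart v"
    using large_swap[of v v'] cr(1,5) large_dart(2)[OF cr(2)] by auto
  moreover have "(v, v') \<noteq> large_dart v" using cr(4) large_dart(2)[OF cr(2)] by auto
  moreover have "(v, v') \<noteq> rho (v, v')" using rho_neq[of "(v, v')"] cr(1) by auto
  moreover have "card (face (v, v')) \<ge> 4" "card (face (rho (v, v'))) \<ge> 4"
    using card_face_ge3[of "(v, v')"] card_face_ge3[of "(v', v)"] crossing_deg3_not_triangle
      crossing_deg3_not_triangle' swap cr(1) Adj_sym by (auto simp: le_less)
  ultimately show quad: "card (face (v, v')) = 4" "card (face (v', v)) = 4"
    using large_corner_deg3_quadrangles[OF large_dart[OF cr(2)] deg3, of "(v, v')" "rho (v, v')"]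
      rho_out[of "(v, v')" v] cr(1) swap by (auto simp: in_out_darts)
  show "deg Adj v' = 3"
    using quadrangle_corner_deg3[OF cr(3), of "(v', v)"] quad(2) cr(1) Adj_sym
    by (simp add: in_out_darts)
qed

end

text \<open>The two quadrangles at the edge \<open>vv'\<close> continue the ladder: their far edge \<open>xy\<close> is again
  crossing, with the large faces on the same sides.\<close>

lemma crossing_deg3_ladder:
  assumes crossing: "crossing v v'" and deg3: "deg Adj v = 3" and l: "large_dart v = (v, x)"
  obtains y where "rho (v', v) = (v', y)" "crossing x y" "deg Adj x = 3" "deg Adj y = 3"
    "large_face x = large_face v" "large_face y = large_face v'"
proof -
  have cr: "Adj v v'" "has_large_corner v" "has_large_corner v'"
    using crossing unfolding crossing_def by auto
  have vx: "Adj v x" "large (v, x)"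
    using large_dart_in_darts[OF cr(2)] large_dart(2)[OF cr(2)] l by auto
  have rvx: "rho (v, x) = (v, v')" using crossing_deg3_rotation(1)[OF crossing deg3] l by simp
  obtain y where y: "rho (v', v) = (v', y)" "rho (y, v') = (y, x)" "rho (x, y) = (x, v)" "Adj v' y"
    using quadrangle_walk[of v x v'] vx rvx crossing_deg3_quadrangles(1)[OF crossing deg3] by auto
  have yx: "Adj y x" using rho_in_darts[of "(y, v')"] y(2,4) Adj_sym by auto
  have xl: "large (rho (x, v))" using large_swap[of x v] vx Adj_sym by simp
  have "rho (x, v) \<in> D" "fst (rho (x, v)) = x"
    using rho_in_darts[of "(x, v)"] rho_fst[of "(x, v)"] vx(1) Adj_sym by auto
  then have lx: "large_dart x = rho (x, v)" "has_large_corner x"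
    using large_dart_eq[of "rho (x, v)"] has_large_cornerI[of "rho (x, v)"] xl by auto
  have "deg Adj v' = 3" using crossing_deg3_quadrangles(3)[OF crossing deg3] .
  then have v'y: "rho (v', y) = large_dart v'"
    using crossing_deg3_rotation(2)[OF crossing_sym[OF crossing]] y(1) by simp
  then have yl: "large (y, v')" using large_swap[of v' y] large_dart(2)[OF cr(3)] y(4) by simp
  have ly: "large_dart y = (y, v')" "has_large_corner y"
    using large_dart_eq[of "(y, v')"] has_large_cornerI[of "(y, v')"] yl y(4) Adj_sym by auto
  have "\<not> large (x, y)"
    using not_large_rho_rho[of "(x, y)"] y(3) xl yx Adj_sym by auto
  moreover have "\<not> large (y, x)" using not_large_rho[of "(y, v')"] y(2,4) yl Adj_sym by auto
  ultimately have xy: "crossing x y" using lx(2) ly(2) yx Adj_sym unfolding crossing_def by blast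
  have faces: "face (y, x) = face (v, v')" "face (x, v) = face (v, v')"
    using face_swap[of v' v] face_swap[of y v'] face_swap[of x y] y cr(1) yx Adj_sym by auto
  have "deg Adj x = 3" "deg Adj y = 3"
    using quadrangle_corner_deg3[OF lx(2), of "(x, v)"]
      quadrangle_corner_deg3[OF ly(2), of "(y, x)"] faces
      crossing_deg3_quadrangles(1)[OF crossing deg3] vx(1) yx Adj_sym
    by (auto simp: in_out_darts)
  moreover have "large_face x = large_face v"
    using lx(1) l face_swap[of x v] vx(1) Adj_sym unfolding large_face_def by simp
  moreover have "large_face y = large_face v'"
    using ly(1) v'y face_swap[of v' y] y(4) unfolding large_face_def by simp
  ultimately show thesis using that y(1) xy by blast
qed

subsection \<open>A crossing edge at a vertex of degree 4\<close>

context
  fixes v v' x a b s :: 'v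
  assumes crossing: "crossing v v'" and deg4: "deg Adj v = 4"
    and rotation: "large_dart v = (v, x)" "rho (v, x) = (v, a)" "rho (v, a) = (v, b)"
      "rho (v, b) = (v, s)"
begin

lemma crossing_deg4_fan:
  "rho (v, s) = (v, x)" "out v = {(v, x), (v, a), (v, b), (v, s)}"
  "rho (a, v) = (a, x)" "rho (x, a) = (x, v)" "rho (b, v) = (b, a)" "rho (a, b) = (a, v)"
  "rho (s, v) = (s, b)" "rho (b, s) = (b, v)"
  "card (face (v, a)) = 3" "card (face (v, b)) = 3" "card (face (v, s)) = 3"
proof -
  have lv: "has_large_corner v" using crossing unfolding crossing_def by blast
  have vx: "Adj v x" "large (v, x)"
    using large_dart_in_darts[OF lv] large_dart(2)[OF lv] rotation(1) by auto
  have darts: "Adj v a" "Adj v b" "Adj v s"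
    using rho_in_darts vx(1) rotation(2-4) by (metis in_darts)+
  show out: "out v = {(v, x), (v, a), (v, b), (v, s)}" "rho (v, s) = (v, x)"
    using out_darts_deg4[of "(v, x)"] vx(1) deg4 rotation(2-4) by auto
  have "(v, a) \<noteq> (v, x)" "(v, b) \<noteq> (v, x)" "(v, s) \<noteq> (v, x)"
    using rho_neq[of "(v, x)"] rho_rho_neq[of "(v, x)"] rho_neq[of "(v, s)"] vx(1) darts(3)
      rotation(2-3) out(2) by auto
  then show tri: "card (face (v, a)) = 3" "card (face (v, b)) = 3" "card (face (v, s)) = 3"
    using large_corner_deg4_triangles[OF large_dart[OF lv] deg4] rotation(1) out(1) by auto
  show "rho (a, v) = (a, x)" "rho (x, a) = (x, v)"
    using triangle_walk[of v x a] vx(1) rotation(2) tri(1) by auto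
  show "rho (b, v) = (b, a)" "rho (a, b) = (a, v)"
    using triangle_walk[of v a b] darts(1) rotation(3) tri(2) by auto
  show "rho (s, v) = (s, b)" "rho (b, s) = (b, v)"
    using triangle_walk[of v b s] darts(2) rotation(4) tri(3) by auto
qed

lemma crossing_deg4_darts:
  "Adj v x" "Adj v a" "Adj v b" "Adj v s" "Adj a x" "Adj a b" "Adj s b"
  "Adj x v" "Adj a v" "Adj b v" "Adj s v" "Adj x a" "Adj b a" "Adj b s"
proof -
  have "has_large_corner v" using crossing unfolding crossing_def by blast
  then have "large_dart v \<in> D" by (rule large_dart_in_darts)
  then have "(v, x) \<in> D" using rotation(1) by simp
  then show v: "Adj v x" "Adj v a" "Adj v b" "Adj v s"
    using rho_in_darts[of "(v, x)"] rho_in_darts[of "(v, a)"] rho_in_darts[of "(v, b)"]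
      rotation(2-4) by auto
  show "Adj a x" "Adj s b"
    using rho_in_darts[of "(a, v)"] rho_in_darts[of "(s, v)"]
      Adj_sym[OF v(2)] Adj_sym[OF v(4)] crossing_deg4_fan(3,7) by auto
  show "Adj b a" using rho_in_darts[of "(b, v)"] Adj_sym[OF v(3)] crossing_deg4_fan(5) by auto
  then show "Adj a b" by (rule Adj_sym)
  then show "Adj x v" "Adj a v" "Adj b v" "Adj s v" "Adj x a" "Adj b s"
    using Adj_sym v \<open>Adj a x\<close> \<open>Adj s b\<close> by auto
qed

lemma crossing_deg4_neighbour: "v' = a \<or> v' = b"
proof -
  have cr: "Adj v v'" "\<not> large (v, v')" "\<not> large (v', v)" "has_large_corner v"
    using crossing unfolding crossing_def by auto
  have vx: "large (v, x)" using large_dart(2)[OF cr(4)] rotation(1) by simp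
  have "(v, v') \<in> out v" using cr(1) by (simp add: in_out_darts)
  then have "v' \<in> {x, a, b, s}" using crossing_deg4_fan(2) by auto
  moreover have "v' \<noteq> x" using vx cr(2) by auto
  moreover have "v' \<noteq> s"
  proof
    assume "v' = s"
    then have "large (rho (v, v'))" using crossing_deg4_fan(1) vx by simp
    then show False using large_swap[of v v'] cr(1,3) by simp
  qed
  ultimately show ?thesis by auto
qed

lemma crossing_deg4_large: "large (v, x)" "large (rho (x, v))" "large (s, v)"
proof -
  have "has_large_corner v" using crossing unfolding crossing_def by blast
  then show vx: "large (v, x)" using large_dart(2) rotation(1) by metis
  then show "large (rho (x, v))"
    using large_swap[of x v] crossing_deg4_darts(8) by simp
  show "large (s, v)"
    using large_swap[of v s] crossing_deg4_fan(1) crossing_deg4_darts(4) vx by simp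
qed

lemma crossing_deg4_not_large:
  "\<not> large (v, a)" "\<not> large (v, b)" "\<not> large (a, v)" "\<not> large (a, x)" "\<not> large (x, a)"
  "\<not> large (b, v)" "\<not> large (b, a)" "\<not> large (b, s)" "\<not> large (s, b)"
proof -
  note fan = crossing_deg4_fan and E = crossing_deg4_darts and L = crossing_deg4_large
  show "\<not> large (v, a)" "\<not> large (v, b)"
    using not_large_rho[of "(v, x)"] not_large_rho_rho[of "(v, x)"] E(1) L(1) rotation(2,3) by auto
  have "face (b, a) = face (v, b)" "face (a, v) = face (b, a)" "face (a, x) = face (v, a)"
    "face (s, b) = face (v, s)" "face (b, v) = face (s, b)"
    using face_swap[of b v] face_swap[of a b] face_swap[of a v] face_swap[of s v] face_swap[of b s]
      fan(3-8) E by auto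
  then show "\<not> large (a, v)" "\<not> large (a, x)" "\<not> large (b, v)" "\<not> large (b, a)"
    using fan(9-11) by (simp_all add: large_def)
  show "\<not> large (x, a)"
    using not_large_rho_rho[of "(x, a)"] fan(4) L(2) E(12) by auto
  show "\<not> large (b, s)"
    using large_swap[of s b] not_large_rho_rho[of "(s, v)"] fan(7) L(3) E(7,11) by auto
  show "\<not> large (s, b)"
    using not_large_rho[of "(s, v)"] fan(7) L(3) E(11) by auto
qed

text \<open>Whichever of \<open>a\<close>, \<open>b\<close> is \<open>v'\<close>, its large corner is forced to lie on the edge \<open>ab\<close>.\<close>

lemma crossing_deg4_large_ab: "large (a, b)"
proof -
  note fan = crossing_deg4_fan and E = crossing_deg4_darts and N = crossing_deg4_not_large
  have lv': "has_large_corner v'" using crossing unfolding crossing_def by blast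
  from crossing_deg4_neighbour show ?thesis
  proof
    assume "v' = a"
    have "\<not> large (rho (a, x))" using large_swap[of a x] N(5) E(5) by simp
    then have "deg Adj a = 4" "large_dart a = rho (rho (rho (a, v)))"
      using large_dart_fourth[of a "(a, v)"] lv' \<open>v' = a\<close> N(3,4) fan(3) E(9)
      by (auto simp: in_out_darts)
    moreover have "(rho ^^ 4) (a, v) = (a, v)"
      using funpow_deg[of "(a, v)"] \<open>deg Adj a = 4\<close> E(9) by simp
    then have "rho (rho (rho (rho (a, v)))) = rho (a, b)"
      using fan(6) by (simp add: eval_nat_numeral)
    then have "rho (rho (rho (a, v))) = (a, b)"
      using rho_inj_eq[of "rho (rho (rho (a, v)))" "(a, b)"] rho_in_darts E(6,9) by simp
    ultimately show ?thesis using large_dart(2)[OF lv'] \<open>v' = a\<close> by simp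
  next
    assume "v' = b"
    then have "large_dart b = rho (b, a)"
      using large_dart_fourth(2)[of b "(b, s)"] lv' N(6-8) fan(5,8) E(14)
      by (auto simp: in_out_darts)
    then show ?thesis
      using large_swap[of b a] large_dart(2)[OF lv'] \<open>v' = b\<close> E(13) by simp
  qed
qed

lemma crossing_deg4:
  "crossing v a" "crossing v b" "crossing x a" "crossing s b"
  "large_face a = large_face b" "large_face x = large_face v" "large_face s = large_face v"
proof -
  note fan = crossing_deg4_fan and E = crossing_deg4_darts and N = crossing_deg4_not_large
    and L = crossing_deg4_large
  have lv: "has_large_corner v" using crossing unfolding crossing_def by blast
  have ba: "large (rho (b, a))" using large_swap[of b a] crossing_deg4_large_ab E(13) by simp
  have xv: "rho (x, v) \<in> D" "fst (rho (x, v)) = x"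
    using rho_in_darts[of "(x, v)"] rho_fst[of "(x, v)"] E(8) by auto
  have ba': "rho (b, a) \<in> D" "fst (rho (b, a)) = b"
    using rho_in_darts[of "(b, a)"] rho_fst[of "(b, a)"] E(13) by auto
  have large_darts: "large_dart a = (a, b)" "large_dart b = rho (b, a)"
    "large_dart x = rho (x, v)" "large_dart s = (s, v)"
    using large_dart_eq[of "(a, b)"] large_dart_eq[of "rho (b, a)"] large_dart_eq[of "rho (x, v)"]
      large_dart_eq[of "(s, v)"] crossing_deg4_large_ab ba xv ba' L E(6,11) by auto
  have corners: "has_large_corner a" "has_large_corner b" "has_large_corner x" "has_large_corner s"
    using has_large_cornerI[of "(a, b)"] has_large_cornerI[of "rho (b, a)"]
      has_large_cornerI[of "rho (x, v)"] has_large_cornerI[of "(s, v)"]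
      crossing_deg4_large_ab ba xv ba' L E(6,11) by auto
  show "crossing v a" "crossing v b" "crossing x a" "crossing s b"
    unfolding crossing_def using lv corners N E by auto
  show "large_face a = large_face b" "large_face x = large_face v" "large_face s = large_face v"
    unfolding large_face_def using large_darts rotation(1) face_swap[of b a] face_swap[of x v]
      face_swap[of v s] fan(1) E by auto
qed

end

lemma connected_induct:
  assumes "u0 \<in> V" "w \<in> V" "P u0" "\<And>u z. P u \<Longrightarrow> Adj u z \<Longrightarrow> P z"
  shows "P w"
proof -
  have "Adj\<^sup>*\<^sup>* u0 w"
    using pcc assms(1,2) unfolding planar_PCC_def plane_embedded_def connected_graph_def by blast
  then show ?thesis by (induction rule: rtranclp_induct) (use assms(3,4) in blast)+
qed

lemma crossing_propagates_deg3:
  assumes "crossing v v'" "deg Adj v = 3" "Adj v z"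
  shows "\<exists>t. crossing z t \<and> {large_face z, large_face t} = {large_face v, large_face v'}
    \<and> deg Adj z = 3"
proof -
  have lv: "has_large_corner v" "has_large_corner v'" using assms(1) unfolding crossing_def by auto
  have v'3: "deg Adj v' = 3" using crossing_deg3_quadrangles(3)[OF assms(1,2)] .
  obtain x where x: "large_dart v = (v, x)" using large_dart_fst[OF lv(1)] by (metis prod.collapse)
  obtain y where y: "crossing x y" "deg Adj x = 3" "large_face x = large_face v"
    "large_face y = large_face v'"
    using crossing_deg3_ladder[OF assms(1,2) x] by metis
  obtain x' where x': "large_dart v' = (v', x')"
    using large_dart_fst[OF lv(2)] by (metis prod.collapse)
  obtain s where s: "rho (v, v') = (v, s)" "crossing x' s" "deg Adj s = 3"
    "large_face x' = large_face v'" "large_face s = large_face v"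
    using crossing_deg3_ladder[OF crossing_sym[OF assms(1)] v'3 x'] by metis
  have "(v, z) \<in> out v" using assms(3) by (simp add: in_out_darts)
  then have "z \<in> {x, v', s}" using crossing_deg3_rotation(3)[OF assms(1,2)] x s(1) by auto
  then consider "z = x" | "z = v'" | "z = s" by blast
  then show ?thesis
  proof cases
    case 1 with y show ?thesis by blast
  next
    case 2 with v'3 crossing_sym[OF assms(1)] show ?thesis by (intro exI[of _ v]) auto
  next
    case 3 with s crossing_sym show ?thesis by (intro exI[of _ x']) auto
  qed
qed

lemma crossing_propagates_deg4:
  assumes "crossing v v'" "deg Adj v = 4" "Adj v z"
  shows "\<exists>t. crossing z t \<and> {large_face z, large_face t} = {large_face v, large_face v'}"
proof -
  have lv: "has_large_corner v" using assms(1) unfolding crossing_def by auto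
  obtain x where x: "large_dart v = (v, x)" using large_dart_fst[OF lv] by (metis prod.collapse)
  have vx: "(v, x) \<in> D" using large_dart_in_darts[OF lv] x by simp
  obtain a where a: "rho (v, x) = (v, a)" "(v, a) \<in> D" using rho_pairE[OF vx] .
  obtain b where b: "rho (v, a) = (v, b)" "(v, b) \<in> D" using rho_pairE[OF a(2)] .
  obtain s where s: "rho (v, b) = (v, s)" using rho_pairE[OF b(2)] .
  note fan = crossing_deg4_fan[OF assms(1,2) x a(1) b(1) s]
    and cr = crossing_deg4[OF assms(1,2) x a(1) b(1) s]
  have v': "large_face v' = large_face a"
    using crossing_deg4_neighbour[OF assms(1,2) x a(1) b(1) s] cr(5) by auto
  have "(v, z) \<in> out v" using assms(3) by (simp add: in_out_darts)
  then have "z \<in> {x, a, b, s}" using fan(2) by auto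
  then consider "z = x" | "z = a" | "z = b" | "z = s" by blast
  then show ?thesis
  proof cases
    case 1 with cr v' show ?thesis by (intro exI[of _ a]) auto
  next
    case 2 with cr v' crossing_sym show ?thesis by (intro exI[of _ v]) auto
  next
    case 3 with cr v' crossing_sym show ?thesis by (intro exI[of _ v]) auto
  next
    case 4 with cr v' show ?thesis by (intro exI[of _ b]) auto
  qed
qed

lemma crossing_propagates:
  assumes "crossing v v'" "Adj v z"
  shows "\<exists>t. crossing z t \<and> {large_face z, large_face t} = {large_face v, large_face v'}
    \<and> (deg Adj v = 3 \<longrightarrow> deg Adj z = 3)"
  using has_large_corner_deg[of v] assms crossing_propagates_deg3 crossing_propagates_deg4
  unfolding crossing_def by fastforce

end

section \<open>A crossing edge forces a prism or an antiprism\<close>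

locale pcc_crossing = pcc_graph +
  fixes v0 w0
  assumes crossing0: "crossing v0 w0"
begin

lemma v0_in_vertices: "v0 \<in> V"
  using crossing0 has_large_corner_in_vertices unfolding crossing_def by blast

lemma crossing_everywhere: assumes "u \<in> V" shows "\<exists>t. crossing u t"
proof (rule connected_induct[of v0 u "\<lambda>u. \<exists>t. crossing u t"])
  fix u z assume "\<exists>t. crossing u t" "Adj u z"
  then show "\<exists>t. crossing z t" using crossing_propagates by blast
qed (use v0_in_vertices assms crossing0 in auto)

lemma has_large_corner_everywhere: "u \<in> V \<Longrightarrow> has_large_corner u"
  using crossing_everywhere unfolding crossing_def by blast

lemma deg_uniform: assumes "u \<in> V" shows "deg Adj u = deg Adj v0"
proof (cases "\<exists>w\<in>V. deg Adj w = 3")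
  case True
  then obtain w where w: "w \<in> V" "deg Adj w = 3" by blast
  have "deg Adj z = 3" if "z \<in> V" for z
  proof (rule connected_induct[of w z "\<lambda>z. deg Adj z = 3"])
    fix u z assume "deg Adj u = 3" "Adj u z"
    moreover obtain t where "crossing u t"
      using crossing_everywhere Adj_in_vertices \<open>Adj u z\<close> by blast
    ultimately show "deg Adj z = 3" using crossing_propagates by blast
  qed (use w that in auto)
  then show ?thesis using assms v0_in_vertices by simp
next
  case False
  then show ?thesis
    using has_large_corner_deg has_large_corner_everywhere assms v0_in_vertices by metis
qed

lemma deg_v0: "deg Adj v0 = 3 \<or> deg Adj v0 = 4"
  using has_large_corner_deg has_large_corner_everywhere v0_in_vertices by blast

definition small_len :: nat where
  "small_len = (if deg Adj v0 = 3 then 4 else 3)"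

lemma card_small_face:
  assumes "d \<in> D" "\<not> large d" shows "card (face d) = small_len"
proof -
  let ?u = "fst d"
  have u: "?u \<in> V" "has_large_corner ?u" "d \<in> out ?u"
    using assms(1) darts_subset has_large_corner_everywhere dart_in_out_darts by auto
  have not_l: "d \<noteq> large_dart ?u" using assms(2) large_dart(2)[OF u(2)] by auto
  show ?thesis
  proof (cases "deg Adj v0 = 3")
    case True
    then have deg3: "deg Adj ?u = 3" using deg_uniform u(1) by simp
    obtain t where t: "crossing ?u t" using crossing_everywhere u(1) by blast
    have "d = (?u, t) \<or> d = rho (?u, t)"
      using crossing_deg3_rotation(3)[OF t deg3] u(3) not_l by auto
    moreover have "card (face (?u, t)) = 4" "card (face (rho (?u, t))) = 4"
      using crossing_deg3_quadrangles(1,2)[OF t deg3] face_swap[of ?u t] t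
      unfolding crossing_def by auto
    ultimately show ?thesis using True unfolding small_len_def by auto
  next
    case False
    then have "deg Adj ?u = 4" using deg_uniform deg_v0 u(1) by auto
    then show ?thesis
      using large_corner_deg4_triangles[OF large_dart[OF u(2)]] u(3) not_l False
      unfolding small_len_def by auto
  qed
qed

definition large_faces where
  "large_faces = {X \<in> faces Adj rho. 20 \<le> card X}"

definition small_faces where
  "small_faces = {X \<in> faces Adj rho. card X < 20}"

lemma faces_split:
  "faces Adj rho = large_faces \<union> small_faces" "large_faces \<inter> small_faces = {}"
  "finite large_faces" "finite small_faces"
  unfolding large_faces_def small_faces_def using finite_faces by auto

lemma large_dart_image: "large_dart ` V = {d \<in> D. large d}"
proof
  show "large_dart ` V \<subseteq> {d \<in> D. large d}"
    using large_dart_in_darts large_dart(2) has_large_corner_everywhere by blast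
  show "{d \<in> D. large d} \<subseteq> large_dart ` V"
  proof
    fix d assume "d \<in> {d \<in> D. large d}"
    then have "large_dart (fst d) = d" "fst d \<in> V"
      using large_dart_eq darts_subset by auto
    then show "d \<in> large_dart ` V" by (metis image_eqI)
  qed
qed

lemma inj_on_large_dart: "inj_on large_dart V"
  by (rule inj_onI) (metis large_dart_fst has_large_corner_everywhere)

lemma Union_large_faces: "\<Union>large_faces = {d \<in> D. large d}"
proof
  show "\<Union>large_faces \<subseteq> {d \<in> D. large d}"
  proof
    fix z assume "z \<in> \<Union>large_faces"
    then obtain d where d: "d \<in> D" "z \<in> face d" "20 \<le> card (face d)"
      unfolding large_faces_def faces_def by blast
    then show "z \<in> {d \<in> D. large d}"
      using face_subset[OF d(1)] face_eqI[OF d(1,2)] unfolding large_def by auto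
  qed
  show "{d \<in> D. large d} \<subseteq> \<Union>large_faces"
    unfolding large_faces_def faces_def large_def using face_self by blast
qed

lemma sum_card_large_faces: "(\<Sum>X\<in>large_faces. card X) = card V"
  using card_Union_faces[of large_faces] Union_large_faces large_dart_image
    card_image[OF inj_on_large_dart] unfolding large_faces_def by auto

lemma sum_card_small_faces: "(\<Sum>X\<in>small_faces. card X) = small_len * card small_faces"
proof -
  have "card X = small_len" if "X \<in> small_faces" for X
    using that card_small_face unfolding small_faces_def faces_def large_def by auto
  then show ?thesis by simp
qed

lemma face_counts:
  "card large_faces = 2"
  "deg Adj v0 = 3 \<Longrightarrow> 2 * card small_faces = card V"
  "deg Adj v0 = 4 \<Longrightarrow> card small_faces = card V"
proof -
  have "card V * deg Adj v0 = card V + small_len * card small_faces"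
    using card_darts_eq_sum_deg deg_uniform card_Union_faces[of "faces Adj rho"] Union_faces
      sum.union_disjoint[OF faces_split(3,4,2), of card] faces_split(1)
      sum_card_large_faces sum_card_small_faces by simp
  moreover have "2 * num_edges Adj = card V * deg Adj v0"
    using card_darts_eq_sum_deg card_darts_eq_twice_edges deg_uniform by simp
  moreover have
    "int (card V) - int (num_edges Adj) + int (card large_faces) + int (card small_faces) = 2"
    using pcc card_Un_disjoint[OF faces_split(3,4,2)] faces_split(1)
    unfolding planar_PCC_def plane_embedded_def by simp
  ultimately show "card large_faces = 2"
    "deg Adj v0 = 3 \<Longrightarrow> 2 * card small_faces = card V"
    "deg Adj v0 = 4 \<Longrightarrow> card small_faces = card V"
    using deg_v0 unfolding small_len_def by auto
qed

lemma large_face_in_large_faces: "u \<in> V \<Longrightarrow> large_face u \<in> large_faces"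
  using large_dart_in_darts large_dart(2) has_large_corner_everywhere
  unfolding large_faces_def large_face_def faces_def large_def by blast

lemma large_faces_eq_image: "large_faces = large_face ` V"
proof
  show "large_faces \<subseteq> large_face ` V"
  proof
    fix X assume "X \<in> large_faces"
    then obtain d where d: "d \<in> D" "X = face d" "large d"
      unfolding large_faces_def faces_def large_def by blast
    then have "X = large_face (fst d)" "fst d \<in> V"
      using large_dart_eq darts_subset unfolding large_face_def by auto
    then show "X \<in> large_face ` V" by blast
  qed
qed (use large_face_in_large_faces in blast)

lemma crossing_large_face_neq:
  assumes "crossing v w" shows "large_face v \<noteq> large_face w"
proof
  assume eq: "large_face v = large_face w"
  let ?P = "\<lambda>z. \<exists>t. crossing z t \<and> large_face z = large_face v \<and> large_face t = large_face v"
  have v: "v \<in> V" using assms has_large_corner_in_vertices unfolding crossing_def by blast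
  have "?P z" if "z \<in> V" for z
  proof (rule connected_induct[of v z ?P])
    fix u z assume "?P u" "Adj u z"
    then obtain t where
      t: "crossing u t" "large_face u = large_face v" "large_face t = large_face v"
      by blast
    then obtain t' where "crossing z t'" "{large_face z, large_face t'} = {large_face v}"
      using crossing_propagates[OF t(1) \<open>Adj u z\<close>] by auto
    then show "?P z" by (metis insertI1 insert_commute singletonD)
  qed (use v that assms eq in auto)
  then have "large_faces \<subseteq> {large_face v}" using large_faces_eq_image by auto
  then have "card large_faces \<le> 1" using card_mono[of "{large_face v}"] by simp
  then show False using face_counts(1) by simp
qed

lemma crossing_iff_large_face_neq:
  assumes "Adj u w" shows "crossing u w \<longleftrightarrow> large_face u \<noteq> large_face w"
  using crossing_large_face_neq not_crossing_large_face_eq[OF _ _ assms]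
    has_large_corner_everywhere Adj_in_vertices[OF assms] by blast

lemma card_large_face:
  assumes "u \<in> V" shows "card (large_face u) = card {w \<in> V. large_face w = large_face u}"
proof -
  let ?W = "{w \<in> V. large_face w = large_face u}"
  have l: "large_dart u \<in> D" using large_dart_in_darts has_large_corner_everywhere assms by blast
  have "large_face u = large_dart ` ?W"
  proof
    show "large_face u \<subseteq> large_dart ` ?W"
    proof
      fix e assume e: "e \<in> large_face u"
      then have "e \<in> D" "face e = large_face u"
        using face_subset[OF l] face_eqI[OF l] unfolding large_face_def by auto
      moreover have "large e"
        using calculation(2) large_dart(2) has_large_corner_everywhere assms
        unfolding large_def large_face_def by metis
      ultimately have "large_dart (fst e) = e" "fst e \<in> ?W"
        using large_dart_eq darts_subset unfolding large_face_def by auto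
      then show "e \<in> large_dart ` ?W" by (metis image_eqI)
    qed
    show "large_dart ` ?W \<subseteq> large_face u"
      unfolding large_face_def using face_self by blast
  qed
  then show ?thesis
    using card_image inj_on_subset[OF inj_on_large_dart]
    by (metis (no_types, lifting) mem_Collect_eq subsetI)
qed

lemma card_darts_between_large_faces:
  assumes "large_faces = {A, B}" "A \<noteq> B"
  shows "card {d \<in> D. large_face (fst d) = A \<and> large_face (snd d) = B}
    = (deg Adj v0 - 2) * card {u \<in> V. large_face u = A}"
proof -
  let ?VA = "{u \<in> V. large_face u = A}"
  let ?C = "\<lambda>u. {d \<in> out u. \<not> large d \<and> \<not> large (rho d)}"
  have crossing_dart: "crossing u w \<longleftrightarrow> \<not> large (u, w) \<and> \<not> large (rho (u, w))" if "Adj u w" for u w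
    using has_large_corner_everywhere Adj_in_vertices[OF that] large_swap[of u w] that
    unfolding crossing_def by auto
  have "{d \<in> D. large_face (fst d) = A \<and> large_face (snd d) = B} = (\<Union>u\<in>?VA. ?C u)"
  proof (intro set_eqI iffI)
    fix d assume d: "d \<in> {d \<in> D. large_face (fst d) = A \<and> large_face (snd d) = B}"
    obtain u w where uw: "d = (u, w)" by (cases d)
    then have uw': "Adj u w" "large_face u = A" "large_face w = B" using d by auto
    then have "crossing u w" using crossing_iff_large_face_neq assms(2) by simp
    then have "d \<in> ?C u" using crossing_dart[OF uw'(1)] uw uw'(1) by (simp add: in_out_darts)
    moreover have "u \<in> ?VA" using uw' Adj_in_vertices by blast
    ultimately show "d \<in> (\<Union>u\<in>?VA. ?C u)" by blast
  next
    fix d assume "d \<in> (\<Union>u\<in>?VA. ?C u)"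
    then obtain u where u: "u \<in> ?VA" "d \<in> ?C u" by blast
    then have "fst d = u" using in_out_darts by blast
    then obtain w where "d = (u, w)" by (cases d) auto
    with u have uw: "d = (u, w)" "u \<in> ?VA" "d \<in> ?C u" by auto
    then have uw': "Adj u w" "fst d = u" "\<not> large (u, w) \<and> \<not> large (rho (u, w))"
      by (auto simp: in_out_darts)
    then have "large_face w \<noteq> A"
      using crossing_iff_large_face_neq[OF uw'(1)] crossing_dart[OF uw'(1)] uw(2) by simp
    moreover have "large_face w \<in> {A, B}"
      using large_face_in_large_faces Adj_in_vertices[OF uw'(1)] assms(1) by blast
    ultimately show "d \<in> {d \<in> D. large_face (fst d) = A \<and> large_face (snd d) = B}"
      using uw uw'(1,2) by auto
  qed
  moreover have "card (\<Union>u\<in>?VA. ?C u) = (\<Sum>u\<in>?VA. card (?C u))"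
    by (rule card_UN_disjoint) (use finite_vertices finite_out_darts disjoint_out_darts in auto)
  moreover have "card (?C u) = deg Adj v0 - 2" if "u \<in> ?VA" for u
    using card_out_darts_off_large_face has_large_corner_everywhere deg_uniform that by auto
  ultimately show ?thesis by simp
qed

text \<open>Counting the crossing darts from either side shows that the two large faces have the
  same length.\<close>

lemma large_faces_balanced:
  obtains A B N where "large_faces = {A, B}" "A \<noteq> B" "card A = N" "card B = N"
    "card V = 2 * N"
proof -
  obtain A B where AB: "large_faces = {A, B}" "A \<noteq> B"
    using face_counts(1) unfolding card_2_iff by blast
  let ?V = "\<lambda>X. {u \<in> V. large_face u = X}"
  let ?X = "\<lambda>X Y. {d \<in> D. large_face (fst d) = X \<and> large_face (snd d) = Y}"
  have "?X B A = prod.swap ` ?X A B"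
  proof (intro set_eqI iffI)
    fix d assume "d \<in> ?X B A"
    then have "prod.swap d \<in> ?X A B" using darts_swap by (cases d) auto
    then have "prod.swap (prod.swap d) \<in> prod.swap ` ?X A B" by (rule imageI)
    then show "d \<in> prod.swap ` ?X A B" by simp
  qed (use darts_swap in auto)
  then have "card (?X B A) = card (?X A B)" by (simp add: card_image)
  moreover have "deg Adj v0 - 2 > 0" using deg_v0 by auto
  ultimately have VAB: "card (?V A) = card (?V B)"
    using card_darts_between_large_faces[OF AB] card_darts_between_large_faces[of B A] AB
    by (simp add: insert_commute)
  have "V = ?V A \<union> ?V B" using large_face_in_large_faces AB(1) by auto
  then have "card V = card (?V A) + card (?V B)"
    using card_Un_disjoint[of "?V A" "?V B"] finite_vertices AB(2) by auto
  moreover have "card X = card (?V X)" if "X \<in> large_faces" for X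
    using that card_large_face large_faces_eq_image by auto
  ultimately show thesis using that[of A B "card (?V A)"] AB VAB by auto
qed

lemma face_lengths:
  assumes "large_faces = {A, B}" "A \<noteq> B" "card A = N" "card B = N"
  shows "image_mset face_len (mset_set (faces Adj rho))
    = {#N, N#} + replicate_mset (card small_faces) small_len"
proof -
  have "mset_set (faces Adj rho) = mset_set large_faces + mset_set small_faces"
    using faces_split mset_set_Union by metis
  moreover have
    "image_mset face_len (mset_set small_faces) = replicate_mset (card small_faces) small_len"
  proof -
    have "image_mset face_len (mset_set small_faces)
        = image_mset (\<lambda>_. small_len) (mset_set small_faces)"
      using sum_card_small_faces card_small_face faces_split(4)
      by (intro image_mset_cong) (auto simp: face_len_def small_faces_def faces_def large_def)
    then show ?thesis using faces_split(4) by (simp add: image_mset_const_eq)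
  qed
  ultimately show ?thesis using assms by (simp add: face_len_def)
qed

lemma corner_lengths:
  assumes "u \<in> V"
  shows "image_mset face_len (faces_at Adj rho u)
    = {#card (large_face u)#} + replicate_mset (deg Adj v0 - 1) small_len"
proof -
  let ?l = "large_dart u"
  have l: "?l \<in> out u" "large ?l" using large_dart has_large_corner_everywhere assms by auto
  have split: "mset_set (out u) = add_mset ?l (mset_set (out u - {?l}))"
    using mset_set.remove[OF finite_out_darts l(1)] .
  have "card (face d) = small_len" if "d \<in> out u - {?l}" for d
    using card_small_face large_corner_unique[OF l] that out_darts_subset by blast
  then have "image_mset (\<lambda>d. card (face d)) (mset_set (out u - {?l}))
      = image_mset (\<lambda>_. small_len) (mset_set (out u - {?l}))"
    by (intro image_mset_cong) (simp add: finite_out_darts)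
  also have "\<dots> = replicate_mset (deg Adj v0 - 1) small_len"
    using deg_uniform assms l(1) finite_out_darts unfolding deg_def
    by (simp add: image_mset_const_eq)
  finally have small: "image_mset (\<lambda>d. card (face d)) (mset_set (out u - {?l}))
      = replicate_mset (deg Adj v0 - 1) small_len" .
  show ?thesis
    unfolding faces_at_def face_len_def large_face_def
    by (simp add: split small multiset.map_comp o_def)
qed

lemma prism_or_antiprism: "is_prism V Adj rho \<or> is_antiprism V Adj rho"
proof -
  obtain A B N where AB: "large_faces = {A, B}" "A \<noteq> B" "card A = N" "card B = N"
    and V: "card V = 2 * N"
    by (rule large_faces_balanced)
  have "N \<ge> 20" using AB unfolding large_faces_def by auto
  have len: "card (large_face u) = N" if "u \<in> V" for u
    using large_face_in_large_faces[OF that] AB by auto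
  note faces = face_lengths[OF AB] and corners = corner_lengths
  from deg_v0 show ?thesis
  proof
    assume "deg Adj v0 = 3"
    then have "card small_faces = N" "small_len = 4" using face_counts V small_len_def by auto
    then have "is_prism V Adj rho"
      unfolding is_prism_def using \<open>N \<ge> 20\<close> V faces corners len \<open>deg Adj v0 = 3\<close>
      by (intro exI[of _ N]) (auto simp: numeral_2_eq_2)
    then show ?thesis ..
  next
    assume "deg Adj v0 = 4"
    then have "card small_faces = 2 * N" "small_len = 3" using face_counts V small_len_def by auto
    then have "is_antiprism V Adj rho"
      unfolding is_antiprism_def using \<open>N \<ge> 20\<close> V faces corners len \<open>deg Adj v0 = 4\<close>
      by (intro exI[of _ N]) (auto simp: numeral_3_eq_3)
    then show ?thesis ..
  qed
qed

end

context pcc_graph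
begin

lemma no_crossing: "\<not> crossing v w"
proof
  assume "crossing v w"
  then interpret pcc_crossing V Adj rho v w by unfold_locales
  show False using prism_or_antiprism pcc unfolding planar_PCC_def by blast
qed

lemma large_face_contains_edge:
  assumes "Adj v w" "has_large_corner v" "has_large_corner w"
  shows "(v, w) \<in> large_face v \<or> (w, v) \<in> large_face v"
proof -
  have "large (v, w) \<or> large (w, v)" using no_crossing assms unfolding crossing_def by blast
  then show ?thesis
  proof
    assume "large (v, w)"
    then have "large_dart v = (v, w)" using large_dart_eq[of "(v, w)"] assms(1) by simp
    then show ?thesis unfolding large_face_def using face_self by simp
  next
    assume "large (w, v)"
    then have "large_dart w = (w, v)" using large_dart_eq[of "(w, v)"] Adj_sym[OF assms(1)] by simp
    moreover have "large_face w = large_face v"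
      using not_crossing_large_face_eq[OF assms(3,2) Adj_sym[OF assms(1)] no_crossing] .
    ultimately show ?thesis unfolding large_face_def using face_self by metis
  qed
qed

end

lemma face_edges_memI:
  assumes "(a, b) \<in> X" "finite X" shows "{a, b} \<in># face_edges X"
proof -
  have "{a, b} \<in> (\<lambda>(u, w). {u, w}) ` set_mset (mset_set X)"
    by (rule image_eqI[of _ _ "(a, b)"]) (use assms in simp_all)
  then show ?thesis unfolding face_edges_def in_image_mset .
qed

theorem lemma2p4:
  fixes V :: "'v set" and Adj :: "'v \<Rightarrow> 'v \<Rightarrow> bool"
    and rho :: "'v \<times> 'v \<Rightarrow> 'v \<times> 'v"
    and v v' :: 'v and \<sigma> \<sigma>' :: "('v \<times> 'v) set"
  assumes "planar_PCC V Adj rho"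
    and "v \<in> V" and "v' \<in> V"
    and "\<sigma> \<in># faces_at Adj rho v" and "\<sigma>' \<in># faces_at Adj rho v'"
    and "face_len \<sigma> \<ge> 20" and "face_len \<sigma>' \<ge> 20"
    and "Adj v v'"
  shows "\<sigma> = \<sigma>' \<and> {v, v'} \<in># face_edges \<sigma>"
proof -
  interpret pcc_graph V Adj rho by unfold_locales (fact assms(1))
  obtain d d' where d: "d \<in> out v" "\<sigma> = face d" and d': "d' \<in> out v'" "\<sigma>' = face d'"
    using assms(4,5) finite_out_darts unfolding faces_at_def by auto
  have "large d" "large d'" using assms(6,7) d d' unfolding large_def face_len_def by auto
  have corners: "has_large_corner v" "has_large_corner v'"
    using d(1) d'(1) \<open>large d\<close> \<open>large d'\<close> unfolding has_large_corner_def by blast+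
  have "fst d = v" "fst d' = v'" "d \<in> D" "d' \<in> D" using d(1) d'(1) in_out_darts by auto
  then have faces: "\<sigma> = large_face v" "\<sigma>' = large_face v'"
    using large_dart_eq[of d] large_dart_eq[of d'] \<open>large d\<close> \<open>large d'\<close> d(2) d'(2)
    unfolding large_face_def by auto
  have "\<sigma> = \<sigma>'"
    using not_crossing_large_face_eq[OF corners assms(8) no_crossing] faces by simp
  moreover have "{v, v'} \<in># face_edges \<sigma>"
  proof -
    have fin: "finite \<sigma>" using finite_face \<open>d \<in> D\<close> d(2) by simp
    have "(v, v') \<in> \<sigma> \<or> (v', v) \<in> \<sigma>"
      using large_face_contains_edge[OF assms(8) corners] faces(1) by simp
    then show ?thesis
    proof
      assume "(v', v) \<in> \<sigma>"
      from face_edges_memI[OF this fin] show ?thesis by (simp add: insert_commute)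
    qed (rule face_edges_memI[OF _ fin])
  qed
  ultimately show ?thesis ..
qed

end
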